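(* Let $\psi:[0,2]\to[0,+\infty)$ be a decreasing $C^1$ function with $\psi(2)=0$ and $\psi'(2)<0$. Let $Q:=(\mathbb{R}^3\setminus\{0\})\times(\mathbb{R}^3\setminus\{0\})\times\mathbb{R}^3$ and define $T:Q\to\mathbb{R}^3$ by $$T(x_1,x_2,v)=\begin{cases}\psi\Big(\Big\|\frac{x_1}{\|x_1\|}-\frac{x_2}{\|x_2\|}\Big\|\Big)\,R\Big(\frac{x_2}{\|x_2\|},\frac{x_1}{\|x_1\|}\Big)v, & \text{if } \frac{x_1}{\|x_1\|}+\frac{x_2}{\|x_2\|}\neq0,\\ 0, & \text{if } \frac{x_1}{\|x_1\|}+\frac{x_2}{\|x_2\|}=0.\end{cases}$$ Then $T$ is locally Lipschitz continuous on $Q$.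
   Context: $\|\cdot\|$ is the Euclidean norm on $\mathbb{R}^3$. For column vectors $a,b$ in the unit sphere $\mathbb{S}^2$ with $a\ne-b$, $R(a,b)=I$ if $a=b$, and otherwise $$R(a,b)=\langle a,b\rangle I-ab^T+ba^T+(1-\langle a,b\rangle)\Big(\frac{a\times b}{\|a\times b\|}\Big)\Big(\frac{a\times b}{\|a\times b\|}\Big)^T.$$ *)

theory Defs
  imports "HOL-Analysis.Analysis" "HOL-Analysis.Cross3"
begin

unbundle no cross3_syntax
unbundle set_product_syntax

definition outer :: "real^3 \<Rightarrow> real^3 \<Rightarrow> real^3^3" where
  "outer a b = (\<chi> i j. a $ i * b $ j)"

text \<open>The rotation matrix R(a,b) from the paper (meaningful for unit a, b with a \<noteq> -b).\<close>
definition Rot :: "real^3 \<Rightarrow> real^3 \<Rightarrow> real^3^3" where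
  "Rot a b = (if a = b then mat 1 else
     let n = (1 / norm (cross3 a b)) *\<^sub>R (cross3 a b) in
       (a \<bullet> b) *\<^sub>R mat 1 - outer a b + outer b a + (1 - a \<bullet> b) *\<^sub>R outer n n)"

definition Qset :: "((real^3) \<times> (real^3) \<times> (real^3)) set" where
  "Qset = (- {0}) \<times> (- {0}) \<times> UNIV"

definition Tmap :: "(real \<Rightarrow> real) \<Rightarrow> (real^3) \<times> (real^3) \<times> (real^3) \<Rightarrow> real^3" where
  "Tmap \<psi> p = (case p of (x1, x2, v) \<Rightarrow>
     let u1 = (1 / norm x1) *\<^sub>R x1; u2 = (1 / norm x2) *\<^sub>R x2 in
     if u1 + u2 \<noteq> 0 then \<psi> (norm (u1 - u2)) *\<^sub>R (Rot u2 u1 *v v) else 0)"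

definition locally_lipschitz_on :: "'a::metric_space set \<Rightarrow> ('a \<Rightarrow> 'b::metric_space) \<Rightarrow> bool" where
  "locally_lipschitz_on S f \<longleftrightarrow>
     (\<forall>x\<in>S. \<exists>e>0. \<exists>L. L-lipschitz_on (ball x e \<inter> S) f)"

end

(*
  For unit vectors a, b with a + b \<noteq> 0, Rodrigues' formula gives
  R(a,b) w = (a\<bullet>b) w - (b\<bullet>w) a + (a\<bullet>w) b + ((a\<times>b)\<bullet>w) (a\<times>b) / (1 + a\<bullet>b).
  So with a = x2/|x2| and b = x1/|x1|, T is \<psi>(|a-b|) times a trilinear expression in
  (a, b, v) plus the weight \<psi>(|a-b|) / (1 + a\<bullet>b) times ((a\<times>b)\<bullet>v) (a\<times>b).
  Since \<psi> is C^1 it is K-Lipschitz, and \<psi>(2) = 0 gives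
  \<psi>(|a-b|) \<le> K (2 - |a-b|) \<le> K (1 + a\<bullet>b), so the weight is bounded by K. The weight
  need not be Lipschitz near a = -b, but the vector it multiplies has norm at most
  2 (1 + a\<bullet>b) |v|, which compensates exactly. Finally x \<mapsto> x/|x| is Lipschitz away
  from 0.
*)
theory Submission
  imports Defs
begin

lemma norm_scaleR_le_mult:
  fixes x :: "'a::real_normed_vector"
  shows "\<bar>r\<bar> \<le> R \<Longrightarrow> norm x \<le> X \<Longrightarrow> norm (r *\<^sub>R x) \<le> R * X"
  by (simp add: mult_mono)

lemma norm_inner_scaleR_le:
  fixes u v z :: "'a::real_inner"
  shows "norm ((u \<bullet> z) *\<^sub>R v) \<le> norm u * norm z * norm v"
  by (simp add: Cauchy_Schwarz_ineq2 mult_right_mono)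

lemma inner_unit_diff_le:
  fixes a b c d :: "'a::real_inner"
  assumes "norm b = 1" "norm c = 1"
  shows "\<bar>a \<bullet> b - c \<bullet> d\<bar> \<le> norm (a - c) + norm (b - d)"
proof -
  have "a \<bullet> b - c \<bullet> d = (a - c) \<bullet> b + c \<bullet> (b - d)" by (simp add: algebra_simps)
  moreover have "\<bar>(a - c) \<bullet> b\<bar> \<le> norm (a - c)" "\<bar>c \<bullet> (b - d)\<bar> \<le> norm (b - d)"
    using Cauchy_Schwarz_ineq2[of "a - c" b] Cauchy_Schwarz_ineq2[of c "b - d"] assms by simp_all
  ultimately show ?thesis by linarith
qed

lemma norm_diff_diff_le:
  fixes a b c d :: "'a::real_normed_vector"
  shows "\<bar>norm (a - b) - norm (c - d)\<bar> \<le> norm (a - c) + norm (b - d)"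
proof -
  have "\<bar>norm (a - b) - norm (c - d)\<bar> \<le> norm ((a - c) - (b - d))"
    using norm_triangle_ineq3[of "a - b" "c - d"] by (simp add: algebra_simps)
  also have "\<dots> \<le> norm (a - c) + norm (b - d)" by (rule norm_triangle_ineq4)
  finally show ?thesis .
qed

lemma norm_sgn_diff_le:
  fixes x y :: "'a::real_normed_vector"
  assumes "x \<noteq> 0"
  shows "norm (sgn x - sgn y) \<le> 2 * norm (x - y) / norm x"
proof (cases "y = 0")
  case True
  then show ?thesis using assms by (simp add: norm_sgn)
next
  case False
  have nx: "0 < norm x" using assms by simp
  have ny: "0 < norm y" using False by simp
  have c: "1 / norm x - 1 / norm y = ((norm y - norm x) / norm x) * inverse (norm y)"
    using nx ny by (simp add: field_simps)
  have "sgn x - sgn y = (1 / norm x) *\<^sub>R (x - y) + (1 / norm x - 1 / norm y) *\<^sub>R y"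
    by (simp add: sgn_div_norm algebra_simps inverse_eq_divide)
  also have "\<dots> = (1 / norm x) *\<^sub>R (x - y) + ((norm y - norm x) / norm x) *\<^sub>R sgn y"
    unfolding c by (simp add: sgn_div_norm)
  finally have "sgn x - sgn y = (1 / norm x) *\<^sub>R (x - y) + ((norm y - norm x) / norm x) *\<^sub>R sgn y" .
  then have "norm (sgn x - sgn y) \<le> norm (x - y) / norm x + \<bar>norm y - norm x\<bar> / norm x"
    using nx False norm_triangle_ineq[of "(1 / norm x) *\<^sub>R (x - y)" "((norm y - norm x) / norm x) *\<^sub>R sgn y"]
    by (simp add: norm_sgn)
  also have "\<bar>norm y - norm x\<bar> \<le> norm (x - y)"
    using norm_triangle_ineq3[of y x] by (simp add: norm_minus_commute)
  finally show ?thesis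
    using nx by (simp add: divide_right_mono add_divide_distrib[symmetric])
qed

lemma lipschitz_on_sgn:
  assumes "0 < e"
  shows "(2 / e)-lipschitz_on {x::'a::real_normed_vector. e \<le> norm x} sgn"
proof (rule lipschitz_onI)
  fix x y :: 'a assume "x \<in> {x. e \<le> norm x}"
  then have x: "e \<le> norm x" by simp
  with assms have "0 < norm x" by linarith
  have "norm (sgn x - sgn y) \<le> 2 * norm (x - y) / norm x"
    using x assms by (intro norm_sgn_diff_le) auto
  also have "\<dots> \<le> 2 * norm (x - y) / e"
    using x \<open>0 < norm x\<close> assms by (intro divide_left_mono) simp_all
  finally show "dist (sgn x) (sgn y) \<le> 2 / e * dist x y" by (simp add: dist_norm)
qed (use assms in simp)

lemma dist_triple_le:
  fixes x y :: "'a::metric_space \<times> 'b::metric_space \<times> 'c::metric_space"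
  shows "dist (fst x) (fst y) \<le> dist x y" "dist (fst (snd x)) (fst (snd y)) \<le> dist x y"
    "dist (snd (snd x)) (snd (snd y)) \<le> dist x y"
  using dist_fst_le[of x y] dist_snd_le[of x y] dist_fst_le[of "snd x" "snd y"]
    dist_snd_le[of "snd x" "snd y"] by simp_all

lemma ball_triple_subset:
  fixes x1 x2 v :: "'a::real_normed_vector"
  shows "ball (x1, x2, v) r
    \<subseteq> {(y1, y2, w). norm x1 - r \<le> norm y1 \<and> norm x2 - r \<le> norm y2 \<and> norm w \<le> norm v + r}"
proof
  fix q assume q: "q \<in> ball (x1, x2, v) r"
  obtain y1 y2 w where q_eq: "q = (y1, y2, w)" by (cases q)
  have "norm (x1 - y1) < r" "norm (x2 - y2) < r" "norm (v - w) < r"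
    using q dist_triple_le[of "(x1, x2, v)" q] by (auto simp: q_eq dist_norm)
  then show "q \<in> {(y1, y2, w). norm x1 - r \<le> norm y1 \<and> norm x2 - r \<le> norm y2 \<and> norm w \<le> norm v + r}"
    using norm_triangle_ineq2[of x1 y1] norm_triangle_ineq2[of x2 y2] norm_triangle_ineq3[of w v]
    by (auto simp: q_eq norm_minus_commute)
qed

lemma abs_divide_diff_mult_le:
  fixes p1 p2 h1 h2 K D :: real
  assumes h: "0 < h2" "h2 \<le> h1" and p2: "0 \<le> p2" "p2 \<le> K * h2"
    and "\<bar>p1 - p2\<bar> \<le> K * D" and "\<bar>h1 - h2\<bar> \<le> D"
  shows "\<bar>p1 / h1 - p2 / h2\<bar> * h2 \<le> 2 * K * D"
proof -
  have split: "(p1 / h1 - p2 / h2) * h2 = (p1 - p2) * (h2 / h1) - (p2 / h1) * (h1 - h2)"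
    using h by (simp add: field_simps)
  have "\<bar>(p1 - p2) * (h2 / h1)\<bar> \<le> K * D"
  proof -
    have "\<bar>(p1 - p2) * (h2 / h1)\<bar> \<le> \<bar>p1 - p2\<bar>"
      using h mult_left_le[of "h2 / h1" "\<bar>p1 - p2\<bar>"] by (simp add: abs_mult)
    then show ?thesis using assms(5) by linarith
  qed
  moreover have "\<bar>(p2 / h1) * (h1 - h2)\<bar> \<le> K * D"
  proof -
    have K: "p2 / h1 \<le> K" "0 \<le> p2 / h1"
      using h p2 frac_le[of "K * h2" p2 h2 h1] by simp_all
    have "\<bar>(p2 / h1) * (h1 - h2)\<bar> = (p2 / h1) * \<bar>h1 - h2\<bar>"
      using K(2) by (simp only: abs_mult abs_of_nonneg)
    also have "\<dots> \<le> K * D"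
      using K assms(6) by (intro mult_mono) auto
    finally show ?thesis .
  qed
  ultimately have "\<bar>(p1 / h1 - p2 / h2) * h2\<bar> \<le> 2 * K * D"
    unfolding split using abs_triangle_ineq4[of "(p1 - p2) * (h2 / h1)" "(p2 / h1) * (h1 - h2)"]
    by (simp add: mult.assoc)
  then show ?thesis
    using h by (simp add: abs_mult)
qed

lemma C1_lipschitz_on_interval:
  fixes f f' :: "real \<Rightarrow> real"
  assumes "\<forall>t\<in>{a..b}. (f has_real_derivative f' t) (at t within {a..b})"
    and "continuous_on {a..b} f'"
  obtains K where "K-lipschitz_on {a..b} f"
proof -
  obtain B where B: "B > 0" "\<forall>x\<in>f' ` {a..b}. norm x \<le> B"
    using compact_continuous_image[OF assms(2) compact_Icc] compact_imp_bounded bounded_pos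
    by metis
  have "B-lipschitz_on {a..b} f"
  proof (rule lipschitz_onI)
    fix s t assume "s \<in> {a..b}" "t \<in> {a..b}"
    then show "dist (f s) (f t) \<le> B * dist s t"
      using field_differentiable_bound[of "{a..b}" f f' B] assms(1) B
      by (simp add: dist_norm)
  qed (use B in simp)
  then show ?thesis by (rule that)
qed

lemma unit_inner_self: "norm (a::'a::real_inner) = 1 \<Longrightarrow> a \<bullet> a = 1"
  by (simp add: dot_square_norm)

lemma norm_diff_unit_sq:
  fixes a b :: "'a::real_inner"
  assumes "norm a = 1" "norm b = 1"
  shows "(norm (a - b))\<^sup>2 = 2 - 2 * (a \<bullet> b)"
  using assms by (simp add: power2_norm_eq_inner algebra_simps inner_commute unit_inner_self)

lemma norm_add_unit_sq:
  fixes a b :: "'a::real_inner"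
  assumes "norm a = 1" "norm b = 1"
  shows "(norm (a + b))\<^sup>2 = 2 + 2 * (a \<bullet> b)"
  using assms by (simp add: power2_norm_eq_inner algebra_simps inner_commute unit_inner_self)

lemma abs_inner_unit_le:
  fixes a b :: "'a::real_inner"
  shows "norm a = 1 \<Longrightarrow> norm b = 1 \<Longrightarrow> \<bar>a \<bullet> b\<bar> \<le> 1"
  using Cauchy_Schwarz_ineq2[of a b] by simp

lemma unit_add_eq_0_iff:
  fixes a b :: "'a::real_inner"
  assumes "norm a = 1" "norm b = 1"
  shows "a + b = 0 \<longleftrightarrow> a \<bullet> b = -1"
  using norm_add_unit_sq[OF assms] by auto

lemma unit_eq_iff:
  fixes a b :: "'a::real_inner"
  assumes "norm a = 1" "norm b = 1"
  shows "a = b \<longleftrightarrow> a \<bullet> b = 1"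
  using norm_diff_unit_sq[OF assms] by auto

lemma norm_cross3_le: "norm (cross3 x y) \<le> norm x * norm y"
  using norm_cross_dot[of x y] by (metis abs_norm_cancel le_add_same_cancel1 norm_mult
      power2_le_imp_le zero_le_mult_iff norm_ge_zero zero_le_power2)

lemma norm_cross3_unit_sq:
  assumes "norm a = 1" "norm b = 1"
  shows "(norm (cross3 a b))\<^sup>2 = (1 - a \<bullet> b) * (1 + a \<bullet> b)"
  using norm_cross_dot[of a b] assms by (simp add: algebra_simps power2_eq_square)

lemma cross3_unit_diff_le:
  assumes "norm b = 1" "norm c = 1"
  shows "norm (cross3 a b - cross3 c d) \<le> norm (a - c) + norm (b - d)"
proof -
  have "cross3 a b - cross3 c d = cross3 (a - c) b + cross3 c (b - d)"
    by (simp add: Cross3.left_diff_distrib Cross3.right_diff_distrib)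
  moreover have "norm (cross3 (a - c) b) \<le> norm (a - c)" "norm (cross3 c (b - d)) \<le> norm (b - d)"
    using norm_cross3_le[of "a - c" b] norm_cross3_le[of c "b - d"] assms by simp_all
  ultimately show ?thesis by (metis add_mono norm_triangle_le)
qed

definition rot_lin :: "'a::real_inner \<Rightarrow> 'a \<Rightarrow> 'a \<Rightarrow> 'a" where
  "rot_lin a b w = (a \<bullet> b) *\<^sub>R w - (b \<bullet> w) *\<^sub>R a + (a \<bullet> w) *\<^sub>R b"

definition cross_proj :: "real^3 \<Rightarrow> real^3 \<Rightarrow> real^3 \<Rightarrow> real^3" where
  "cross_proj a b w = (cross3 a b \<bullet> w) *\<^sub>R cross3 a b"

lemma outer_mult_vec: "outer a b *v w = (b \<bullet> w) *\<^sub>R a"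
  by (simp add: vec_eq_iff matrix_vector_mult_def outer_def inner_vec_def sum_3 algebra_simps)

lemma Rot_mult_vec:
  assumes a: "norm a = 1" and b: "norm b = 1" and ab: "a + b \<noteq> 0"
  shows "Rot a b *v w = rot_lin a b w + (1 / (1 + a \<bullet> b)) *\<^sub>R cross_proj a b w"
proof (cases "a = b")
  case True
  then show ?thesis by (simp add: Rot_def rot_lin_def cross_proj_def unit_inner_self[OF b])
next
  case False
  define c where "c = cross3 a b"
  have "1 + a \<bullet> b \<noteq> 0" "1 - a \<bullet> b \<noteq> 0"
    using unit_add_eq_0_iff[OF a b] unit_eq_iff[OF a b] ab False by auto
  then have "(1 - a \<bullet> b) * t / (norm c * norm c) = t / (1 + a \<bullet> b)" for t
    using norm_cross3_unit_sq[OF a b] by (simp add: c_def power2_eq_square divide_simps)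
  then show ?thesis
    using False unfolding Rot_def Let_def c_def[symmetric]
    by (simp add: matrix_vector_mult_diff_rdistrib matrix_vector_mult_add_rdistrib
        scaleR_matrix_vector_assoc[symmetric] outer_mult_vec rot_lin_def cross_proj_def c_def power2_eq_square)
qed

lemma norm_rot_lin_le: "norm (rot_lin a b z) \<le> 3 * norm a * norm b * norm z"
proof -
  have "norm ((a \<bullet> b) *\<^sub>R z) \<le> norm a * norm b * norm z"
    "norm ((b \<bullet> z) *\<^sub>R a) \<le> norm a * norm b * norm z"
    "norm ((a \<bullet> z) *\<^sub>R b) \<le> norm a * norm b * norm z"
    using norm_inner_scaleR_le[of a b z] norm_inner_scaleR_le[of b z a]
      norm_inner_scaleR_le[of a z b] by (simp_all add: mult_ac)
  moreover have "norm (rot_lin a b z)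
      \<le> norm ((a \<bullet> b) *\<^sub>R z) + norm ((b \<bullet> z) *\<^sub>R a) + norm ((a \<bullet> z) *\<^sub>R b)"
    unfolding rot_lin_def
    using norm_triangle_ineq[of "(a \<bullet> b) *\<^sub>R z - (b \<bullet> z) *\<^sub>R a" "(a \<bullet> z) *\<^sub>R b"]
      norm_triangle_ineq4[of "(a \<bullet> b) *\<^sub>R z" "(b \<bullet> z) *\<^sub>R a"] by linarith
  ultimately show ?thesis by linarith
qed

lemma rot_lin_diff: "rot_lin a b z - rot_lin c d z = rot_lin (a - c) b z + rot_lin c (b - d) z"
  by (simp add: rot_lin_def algebra_simps)

lemma rot_lin_unit_diff_le:
  fixes a b c d z :: "'a::real_inner"
  assumes "norm b = 1" "norm c = 1"
  shows "norm (rot_lin a b z - rot_lin c d z) \<le> 3 * (norm (a - c) + norm (b - d)) * norm z"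
proof -
  have "norm (rot_lin a b z - rot_lin c d z) \<le> norm (rot_lin (a - c) b z) + norm (rot_lin c (b - d) z)"
    unfolding rot_lin_diff by (rule norm_triangle_ineq)
  also have "\<dots> \<le> 3 * norm (a - c) * norm z + 3 * norm (b - d) * norm z"
    using norm_rot_lin_le[of "a - c" b z] norm_rot_lin_le[of c "b - d" z] assms by simp
  finally show ?thesis by (simp add: algebra_simps)
qed

lemma norm_cross_proj_le:
  assumes "norm a = 1" "norm b = 1"
  shows "norm (cross_proj a b z) \<le> 2 * (1 + a \<bullet> b) * norm z"
proof -
  have "norm (cross_proj a b z) \<le> (norm (cross3 a b))\<^sup>2 * norm z"
    using norm_inner_scaleR_le[of "cross3 a b" z "cross3 a b"]
    by (simp add: cross_proj_def power2_eq_square mult_ac)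
  also have "\<dots> = (1 - a \<bullet> b) * (1 + a \<bullet> b) * norm z"
    using norm_cross3_unit_sq[OF assms] by simp
  also have "\<dots> \<le> 2 * (1 + a \<bullet> b) * norm z"
    using abs_inner_unit_le[OF assms] by (intro mult_right_mono) auto
  finally show ?thesis .
qed

lemma cross_proj_unit_diff_le:
  assumes "norm a = 1" "norm b = 1" "norm c = 1" "norm d = 1"
  shows "norm (cross_proj a b z - cross_proj c d z) \<le> 2 * (norm (a - c) + norm (b - d)) * norm z"
proof -
  define p q where "p = cross3 a b" and "q = cross3 c d"
  have pq: "norm (p - q) \<le> norm (a - c) + norm (b - d)"
    unfolding p_def q_def using cross3_unit_diff_le assms by blast
  have "norm p \<le> 1" "norm q \<le> 1"
    using norm_cross3_le[of a b] norm_cross3_le[of c d] assms by (simp_all add: p_def q_def)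
  then have "norm (((p - q) \<bullet> z) *\<^sub>R p) \<le> norm (p - q) * norm z"
    "norm ((q \<bullet> z) *\<^sub>R (p - q)) \<le> norm (p - q) * norm z"
    using norm_inner_scaleR_le[of "p - q" z p] norm_inner_scaleR_le[of q z "p - q"]
    by (simp_all add: mult_left_le mult_left_le_one_le mult_ac order_trans)
  moreover have "cross_proj a b z - cross_proj c d z = ((p - q) \<bullet> z) *\<^sub>R p + (q \<bullet> z) *\<^sub>R (p - q)"
    by (simp add: cross_proj_def p_def q_def algebra_simps)
  ultimately have "norm (cross_proj a b z - cross_proj c d z) \<le> 2 * norm (p - q) * norm z"
    using norm_triangle_ineq[of "((p - q) \<bullet> z) *\<^sub>R p" "(q \<bullet> z) *\<^sub>R (p - q)"] by simp
  then show ?thesis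
    using pq by (meson mult_right_mono mult_left_mono norm_ge_zero order_trans zero_le_numeral)
qed

definition Tunit :: "(real \<Rightarrow> real) \<Rightarrow> real^3 \<Rightarrow> real^3 \<Rightarrow> real^3 \<Rightarrow> real^3" where
  "Tunit \<psi> a b w = \<psi> (norm (a - b)) *\<^sub>R rot_lin a b w
     + (\<psi> (norm (a - b)) / (1 + a \<bullet> b)) *\<^sub>R cross_proj a b w"

lemma Tunit_diff_right: "Tunit \<psi> a b w - Tunit \<psi> a b z = Tunit \<psi> a b (w - z)"
  by (simp add: Tunit_def rot_lin_def cross_proj_def inner_diff_right algebra_simps)

lemma Tmap_eq_Tunit:
  assumes "x1 \<noteq> 0" "x2 \<noteq> 0" "\<psi> 2 = 0"
  shows "Tmap \<psi> (x1, x2, v) = Tunit \<psi> (sgn x2) (sgn x1) v"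
proof -
  have u: "norm (sgn x1) = 1" "norm (sgn x2) = 1" using assms by (simp_all add: norm_sgn)
  have T: "Tmap \<psi> (x1, x2, v) = (if sgn x1 + sgn x2 \<noteq> 0
      then \<psi> (norm (sgn x1 - sgn x2)) *\<^sub>R (Rot (sgn x2) (sgn x1) *v v) else 0)"
    by (simp add: Tmap_def Let_def sgn_div_norm divide_inverse_commute)
  show ?thesis
  proof (cases "sgn x1 + sgn x2 = 0")
    case True
    then have "norm (sgn x2 - sgn x1) = 2"
      using u by (simp add: eq_neg_iff_add_eq_0[symmetric] scaleR_2[symmetric])
    then show ?thesis using T True assms(3) by (simp add: Tunit_def)
  next
    case False
    then show ?thesis
      using T Rot_mult_vec[OF u(2) u(1), of v]
      by (simp add: Tunit_def norm_minus_commute add.commute scaleR_add_right)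
  qed
qed

locale lipschitz_profile =
  fixes \<psi> :: "real \<Rightarrow> real" and K :: real
  assumes lipschitz: "K-lipschitz_on {0..2} \<psi>"
    and vanishes_at_2: "\<psi> 2 = 0"
    and nonneg: "\<And>t. t \<in> {0..2} \<Longrightarrow> 0 \<le> \<psi> t"
begin

lemma K_nonneg: "0 \<le> K"
  using lipschitz by (rule lipschitz_on_nonneg)

lemma norm_diff_unit_mem:
  fixes a b :: "'a::real_inner"
  assumes "norm a = 1" "norm b = 1"
  shows "norm (a - b) \<in> {0..2}"
  using norm_triangle_ineq4[of a b] assms by simp

lemma psi_diff_unit_le:
  fixes a b c d :: "'a::real_inner"
  assumes "norm a = 1" "norm b = 1" "norm c = 1" "norm d = 1"
  shows "\<bar>\<psi> (norm (a - b)) - \<psi> (norm (c - d))\<bar> \<le> K * (norm (a - c) + norm (b - d))"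
proof -
  have "\<bar>\<psi> (norm (a - b)) - \<psi> (norm (c - d))\<bar> \<le> K * \<bar>norm (a - b) - norm (c - d)\<bar>"
    using lipschitz_onD[OF lipschitz norm_diff_unit_mem norm_diff_unit_mem] assms
    by (simp add: dist_real_def)
  also have "\<dots> \<le> K * (norm (a - c) + norm (b - d))"
    using norm_diff_diff_le K_nonneg by (rule mult_left_mono)
  finally show ?thesis .
qed

lemma psi_unit_le:
  fixes a b :: "'a::real_inner"
  assumes "norm a = 1" "norm b = 1"
  shows "\<psi> (norm (a - b)) \<le> K * (1 + a \<bullet> b)"
proof -
  define s where "s = norm (a - b)"
  have s: "s \<in> {0..2}" using norm_diff_unit_mem[OF assms] by (simp add: s_def)
  have "\<psi> s \<le> K * (2 - s)"
    using lipschitz_onD[OF lipschitz s, of 2] vanishes_at_2 s by (simp add: dist_real_def)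
  also have "2 - s \<le> 1 + a \<bullet> b"
  proof -
    have "s * s \<le> 2 * s" using s by (intro mult_right_mono) auto
    then show ?thesis using norm_diff_unit_sq[OF assms] by (simp add: s_def power2_eq_square)
  qed
  then have "K * (2 - s) \<le> K * (1 + a \<bullet> b)" using K_nonneg by (rule mult_left_mono)
  finally show ?thesis by (simp add: s_def)
qed

lemma psi_unit_bounds:
  fixes a b :: "'a::real_inner"
  assumes "norm a = 1" "norm b = 1"
  shows "0 \<le> \<psi> (norm (a - b))" "\<psi> (norm (a - b)) \<le> 2 * K"
proof -
  have "K * (1 + a \<bullet> b) \<le> K * 2"
    using abs_inner_unit_le[OF assms] K_nonneg by (intro mult_left_mono) auto
  then show "\<psi> (norm (a - b)) \<le> 2 * K" using psi_unit_le[OF assms] by simp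
  show "0 \<le> \<psi> (norm (a - b))" using nonneg[OF norm_diff_unit_mem[OF assms]] .
qed

lemma cross_weight_bounds:
  fixes a b :: "'a::real_inner"
  assumes "norm a = 1" "norm b = 1"
  shows "0 \<le> \<psi> (norm (a - b)) / (1 + a \<bullet> b)" "\<psi> (norm (a - b)) / (1 + a \<bullet> b) \<le> K"
  using nonneg[OF norm_diff_unit_mem[OF assms]] abs_inner_unit_le[OF assms]
    psi_unit_le[OF assms] K_nonneg by (auto simp: divide_le_eq)

lemma norm_Tunit_le:
  assumes a: "norm a = 1" and b: "norm b = 1"
  shows "norm (Tunit \<psi> a b z) \<le> 10 * K * norm z"
proof -
  define p where "p = \<psi> (norm (a - b))"
  have p: "0 \<le> p" "p \<le> 2 * K" using psi_unit_bounds[OF a b] by (simp_all add: p_def)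
  have "norm (rot_lin a b z) \<le> 3 * norm z" using norm_rot_lin_le[of a b z] a b by simp
  then have "norm (p *\<^sub>R rot_lin a b z) \<le> 2 * K * (3 * norm z)"
    using p by (intro norm_scaleR_le_mult) auto
  moreover have "norm ((p / (1 + a \<bullet> b)) *\<^sub>R cross_proj a b z) \<le> K * (4 * norm z)"
  proof -
    have "2 * (1 + a \<bullet> b) * norm z \<le> 4 * norm z"
      using abs_inner_unit_le[OF a b] by (intro mult_right_mono) auto
    then have "norm (cross_proj a b z) \<le> 4 * norm z"
      using norm_cross_proj_le[OF a b, of z] by linarith
    then show ?thesis
      using cross_weight_bounds[OF a b] by (intro norm_scaleR_le_mult) (simp_all add: p_def del: abs_divide)
  qed
  ultimately show ?thesis
    unfolding Tunit_def p_def[symmetric]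
    using norm_triangle_ineq[of "p *\<^sub>R rot_lin a b z" "(p / (1 + a \<bullet> b)) *\<^sub>R cross_proj a b z"]
    by (simp add: algebra_simps)
qed

lemma cross_weight_diff_mult_le:
  assumes a: "norm a = 1" and b: "norm b = 1" and c: "norm c = 1" and d: "norm d = 1"
    and ordered: "1 + c \<bullet> d \<le> 1 + a \<bullet> b"
  shows "\<bar>\<psi> (norm (a - b)) / (1 + a \<bullet> b) - \<psi> (norm (c - d)) / (1 + c \<bullet> d)\<bar> * (1 + c \<bullet> d)
     \<le> 2 * K * (norm (a - c) + norm (b - d))"
proof (cases "1 + c \<bullet> d = 0")
  case True
  then show ?thesis using K_nonneg by simp
next
  case False
  then have "0 < 1 + c \<bullet> d" using abs_inner_unit_le[OF c d] by simp
  then show ?thesis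
  proof (rule abs_divide_diff_mult_le)
    show "1 + c \<bullet> d \<le> 1 + a \<bullet> b" by (fact ordered)
    show "0 \<le> \<psi> (norm (c - d))" using psi_unit_bounds[OF c d] by simp
    show "\<psi> (norm (c - d)) \<le> K * (1 + c \<bullet> d)" using psi_unit_le[OF c d] .
    show "\<bar>\<psi> (norm (a - b)) - \<psi> (norm (c - d))\<bar> \<le> K * (norm (a - c) + norm (b - d))"
      using psi_diff_unit_le[OF a b c d] .
    show "\<bar>(1 + a \<bullet> b) - (1 + c \<bullet> d)\<bar> \<le> norm (a - c) + norm (b - d)"
      using inner_unit_diff_le[OF b c] by simp
  qed
qed

lemma cross_part_diff_le_ordered:
  assumes a: "norm a = 1" and b: "norm b = 1" and c: "norm c = 1" and d: "norm d = 1"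
    and ordered: "1 + c \<bullet> d \<le> 1 + a \<bullet> b"
  shows "norm ((\<psi> (norm (a - b)) / (1 + a \<bullet> b)) *\<^sub>R cross_proj a b z
     - (\<psi> (norm (c - d)) / (1 + c \<bullet> d)) *\<^sub>R cross_proj c d z)
     \<le> 6 * K * (norm (a - c) + norm (b - d)) * norm z"
proof -
  define D where "D = norm (a - c) + norm (b - d)"
  define \<theta>1 \<theta>2 where "\<theta>1 = \<psi> (norm (a - b)) / (1 + a \<bullet> b)" and "\<theta>2 = \<psi> (norm (c - d)) / (1 + c \<bullet> d)"
  define G1 G2 where "G1 = cross_proj a b z" and "G2 = cross_proj c d z"
  have split: "\<theta>1 *\<^sub>R G1 - \<theta>2 *\<^sub>R G2 = \<theta>1 *\<^sub>R (G1 - G2) + (\<theta>1 - \<theta>2) *\<^sub>R G2"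
    by (simp add: algebra_simps)
  have "norm (\<theta>1 *\<^sub>R (G1 - G2)) \<le> K * (2 * D * norm z)"
    using cross_weight_bounds[OF a b] cross_proj_unit_diff_le[OF a b c d, of z]
    by (intro norm_scaleR_le_mult) (simp_all add: \<theta>1_def G1_def G2_def D_def del: abs_divide)
  moreover have "norm ((\<theta>1 - \<theta>2) *\<^sub>R G2) \<le> 2 * K * D * (2 * norm z)"
  proof -
    have "norm ((\<theta>1 - \<theta>2) *\<^sub>R G2) \<le> \<bar>\<theta>1 - \<theta>2\<bar> * (2 * (1 + c \<bullet> d) * norm z)"
      using norm_cross_proj_le[OF c d, of z] by (simp add: G2_def mult_left_mono)
    also have "\<dots> = (\<bar>\<theta>1 - \<theta>2\<bar> * (1 + c \<bullet> d)) * (2 * norm z)"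
      by (simp add: mult_ac)
    also have "\<dots> \<le> 2 * K * D * (2 * norm z)"
      using cross_weight_diff_mult_le[OF assms] unfolding \<theta>1_def \<theta>2_def D_def
      by (rule mult_right_mono) simp
    finally show ?thesis .
  qed
  ultimately have "norm (\<theta>1 *\<^sub>R G1 - \<theta>2 *\<^sub>R G2) \<le> 6 * K * D * norm z"
    unfolding split using norm_triangle_ineq[of "\<theta>1 *\<^sub>R (G1 - G2)" "(\<theta>1 - \<theta>2) *\<^sub>R G2"]
    by (simp add: algebra_simps)
  then show ?thesis by (simp add: \<theta>1_def \<theta>2_def G1_def G2_def D_def)
qed

lemma cross_part_diff_le:
  assumes "norm a = 1" "norm b = 1" "norm c = 1" "norm d = 1"
  shows "norm ((\<psi> (norm (a - b)) / (1 + a \<bullet> b)) *\<^sub>R cross_proj a b z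
     - (\<psi> (norm (c - d)) / (1 + c \<bullet> d)) *\<^sub>R cross_proj c d z)
     \<le> 6 * K * (norm (a - c) + norm (b - d)) * norm z"
proof (cases "1 + c \<bullet> d \<le> 1 + a \<bullet> b")
  case True
  then show ?thesis using cross_part_diff_le_ordered[OF assms] by blast
next
  case False
  then show ?thesis
    using cross_part_diff_le_ordered[OF assms(3,4,1,2), of z]
    by (simp add: norm_minus_commute)
qed

lemma Tunit_unit_diff_le:
  assumes a: "norm a = 1" and b: "norm b = 1" and c: "norm c = 1" and d: "norm d = 1"
  shows "norm (Tunit \<psi> a b z - Tunit \<psi> c d z) \<le> 15 * K * (norm (a - c) + norm (b - d)) * norm z"
proof -
  define D where "D = norm (a - c) + norm (b - d)"
  define p1 p2 where "p1 = \<psi> (norm (a - b))" and "p2 = \<psi> (norm (c - d))"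
  define P1 P2 where "P1 = rot_lin a b z" and "P2 = rot_lin c d z"
  define Q where "Q = (p1 / (1 + a \<bullet> b)) *\<^sub>R cross_proj a b z - (p2 / (1 + c \<bullet> d)) *\<^sub>R cross_proj c d z"
  have split: "Tunit \<psi> a b z - Tunit \<psi> c d z = ((p1 - p2) *\<^sub>R P1 + p2 *\<^sub>R (P1 - P2)) + Q"
    by (simp add: Tunit_def p1_def p2_def P1_def P2_def Q_def algebra_simps)
  have "norm ((p1 - p2) *\<^sub>R P1) \<le> (K * D) * (3 * norm z)"
    using psi_diff_unit_le[OF a b c d] norm_rot_lin_le[of a b z] a b
    by (intro norm_scaleR_le_mult) (simp_all add: p1_def p2_def P1_def D_def)
  moreover have "norm (p2 *\<^sub>R (P1 - P2)) \<le> (2 * K) * (3 * D * norm z)"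
    using psi_unit_bounds[OF c d] rot_lin_unit_diff_le[OF b c]
    by (intro norm_scaleR_le_mult) (simp_all add: p2_def P1_def P2_def D_def)
  moreover have "norm Q \<le> 6 * K * D * norm z"
    using cross_part_diff_le[OF a b c d] by (simp add: Q_def p1_def p2_def D_def)
  ultimately have "norm (Tunit \<psi> a b z - Tunit \<psi> c d z) \<le> 15 * K * D * norm z"
    unfolding split
    using norm_triangle_ineq[of "(p1 - p2) *\<^sub>R P1 + p2 *\<^sub>R (P1 - P2)" Q]
      norm_triangle_ineq[of "(p1 - p2) *\<^sub>R P1" "p2 *\<^sub>R (P1 - P2)"]
    by (simp add: algebra_simps)
  then show ?thesis by (simp add: D_def)
qed

lemma Tunit_diff_le:
  assumes "norm a = 1" "norm b = 1" "norm c = 1" "norm d = 1"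
  shows "norm (Tunit \<psi> a b w - Tunit \<psi> c d w')
    \<le> 10 * K * norm (w - w') + 15 * K * (norm (a - c) + norm (b - d)) * norm w'"
proof -
  have split: "Tunit \<psi> a b w - Tunit \<psi> c d w' = Tunit \<psi> a b (w - w') + (Tunit \<psi> a b w' - Tunit \<psi> c d w')"
    by (simp add: Tunit_diff_right[symmetric])
  show ?thesis
    unfolding split using norm_Tunit_le[OF assms(1,2), of "w - w'"] Tunit_unit_diff_le[OF assms, of w']
      norm_triangle_ineq[of "Tunit \<psi> a b (w - w')" "Tunit \<psi> a b w' - Tunit \<psi> c d w'"]
    by linarith
qed

lemma Tmap_lipschitz_on:
  assumes e: "0 < e" and B: "0 \<le> B"
  shows "(10 * K + 60 * K * B / e)-lipschitz_on
    {(x1, x2, v). e \<le> norm x1 \<and> e \<le> norm x2 \<and> norm v \<le> B} (Tmap \<psi>)"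
proof (rule lipschitz_onI)
  show "0 \<le> 10 * K + 60 * K * B / e" using K_nonneg e B by simp
  fix q q' :: "(real^3) \<times> (real^3) \<times> (real^3)"
  assume "q \<in> {(x1, x2, v). e \<le> norm x1 \<and> e \<le> norm x2 \<and> norm v \<le> B}"
    and "q' \<in> {(x1, x2, v). e \<le> norm x1 \<and> e \<le> norm x2 \<and> norm v \<le> B}"
  then obtain y1 y2 w y1' y2' w' where q: "q = (y1, y2, w)" and q': "q' = (y1', y2', w')"
    and y: "e \<le> norm y1" "e \<le> norm y2" "e \<le> norm y1'" "e \<le> norm y2'" and w': "norm w' \<le> B"
    by auto
  define \<delta> where "\<delta> = dist q q'"
  have y0: "y1 \<noteq> 0" "y2 \<noteq> 0" "y1' \<noteq> 0" "y2' \<noteq> 0"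
    using y e by auto
  have dist_y: "norm (y1 - y1') \<le> \<delta>" "norm (y2 - y2') \<le> \<delta>" and dist_w: "norm (w - w') \<le> \<delta>"
    using dist_triple_le[of q q'] by (simp_all add: q q' \<delta>_def dist_norm)
  have sgn_diff: "norm (sgn y - sgn y') \<le> 2 * \<delta> / e"
    if "e \<le> norm y" "e \<le> norm y'" "norm (y - y') \<le> \<delta>" for y y' :: "real^3"
  proof -
    have "norm (sgn y - sgn y') \<le> 2 * norm (y - y') / e"
      using lipschitz_onD[OF lipschitz_on_sgn[OF e], of y y'] that by (simp add: dist_norm)
    also have "\<dots> \<le> 2 * \<delta> / e" using that e by (intro divide_right_mono) auto
    finally show ?thesis .
  qed
  have "norm (sgn y2 - sgn y2') + norm (sgn y1 - sgn y1') \<le> 4 * \<delta> / e"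
    using sgn_diff[OF y(2,4) dist_y(2)] sgn_diff[OF y(1,3) dist_y(1)] by simp
  then have "15 * K * (norm (sgn y2 - sgn y2') + norm (sgn y1 - sgn y1')) * norm w' \<le> 15 * K * (4 * \<delta> / e) * B"
    using w' K_nonneg e by (intro mult_mono mult_left_mono) (auto simp: \<delta>_def)
  moreover have "10 * K * norm (w - w') \<le> 10 * K * \<delta>"
    using dist_w K_nonneg by (intro mult_left_mono) auto
  moreover have "dist (Tmap \<psi> q) (Tmap \<psi> q') = norm (Tunit \<psi> (sgn y2) (sgn y1) w - Tunit \<psi> (sgn y2') (sgn y1') w')"
    using Tmap_eq_Tunit[where \<psi> = \<psi>, OF y0(1,2) vanishes_at_2]
      Tmap_eq_Tunit[where \<psi> = \<psi>, OF y0(3,4) vanishes_at_2]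
    by (simp add: q q' dist_norm)
  ultimately have "dist (Tmap \<psi> q) (Tmap \<psi> q') \<le> 10 * K * \<delta> + 15 * K * (4 * \<delta> / e) * B"
    using Tunit_diff_le[of "sgn y2" "sgn y1" "sgn y2'" "sgn y1'" w w'] y0 by (simp add: norm_sgn)
  also have "\<dots> = (10 * K + 60 * K * B / e) * dist q q'"
    using e by (simp add: \<delta>_def field_simps)
  finally show "dist (Tmap \<psi> q) (Tmap \<psi> q') \<le> (10 * K + 60 * K * B / e) * dist q q'" .
qed

end

theorem lemma3p5:
  fixes \<psi> \<psi>' :: "real \<Rightarrow> real"
  assumes nonneg: "\<forall>t\<in>{0..2}. \<psi> t \<ge> 0"
    and decr: "\<forall>s\<in>{0..2}. \<forall>t\<in>{0..2}. s \<le> t \<longrightarrow> \<psi> t \<le> \<psi> s"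
    and deriv: "\<forall>t\<in>{0..2}. (\<psi> has_real_derivative \<psi>' t) (at t within {0..2})"
    and C1: "continuous_on {0..2} \<psi>'"
    and end0: "\<psi> 2 = 0"
    and dneg: "\<psi>' 2 < 0"
  shows "locally_lipschitz_on Qset (Tmap \<psi>)"
  unfolding locally_lipschitz_on_def
proof
  obtain K where "K-lipschitz_on {0..2} \<psi>"
    using C1_lipschitz_on_interval[OF deriv C1] .
  then interpret lipschitz_profile \<psi> K
    using end0 nonneg by unfold_locales auto
  fix p assume "p \<in> Qset"
  then obtain x1 x2 v where p: "p = (x1, x2, v)" "x1 \<noteq> 0" "x2 \<noteq> 0"
    by (auto simp: Qset_def)
  define e where "e = min (norm x1) (norm x2) / 2"
  have e: "0 < e" using p by (simp add: e_def)
  have "ball p e \<inter> Qset \<subseteq> {(y1, y2, w). e \<le> norm y1 \<and> e \<le> norm y2 \<and> norm w \<le> norm v + e}"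
    using ball_triple_subset[of x1 x2 v e] by (auto simp: p e_def)
  then have "(10 * K + 60 * K * (norm v + e) / e)-lipschitz_on (ball p e \<inter> Qset) (Tmap \<psi>)"
    using Tmap_lipschitz_on[OF e, of "norm v + e"] e by (auto intro: lipschitz_on_subset)
  then show "\<exists>e>0. \<exists>L. L-lipschitz_on (ball p e \<inter> Qset) (Tmap \<psi>)"
    using e by blast
qed

end
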